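(* Let $\mathcal{P}$ be a finite set of atomic propositions, $u \in (2^{\mathcal{P}})^\ast$, $v \in (2^{\mathcal{P}})^+$, $\rho$ a regular expression, $\varphi$ a PSL formula, $m$ the number of states of the minimal deterministic finite automaton over $2^{\mathcal{P}}$ recognizing $L(\rho)$, and $b = m+1$. Then for every $i$ with $0 \le i \le |uv|-1$: $uv^\omega[i,\infty) \models \rho \mapsto \varphi$ if and only if for all $j \in \mathbb{N}$ with $i < j < |u| + b|v|$, $uv^\omega[i,j) \vdash \rho$ implies $uv^\omega[j-1,\infty) \models \varphi$.
   Context: Words: for $\alpha = a_0a_1\ldots$ and $i\le j$, $\alpha[i,j) = a_i\ldots a_{j-1}$ ($\alpha[i,i)=\varepsilon$), $\alpha[i]=a_i$, $\alpha[i,\infty)=a_ia_{i+1}\ldots$; $uv^\omega = uvvv\ldots$. Regular expressions: atomic expressions $\xi ::= p \in \mathcal{P} \mid \lnot \xi \mid \xi \lor \xi$, with $[\![p]\!] = \{A \subseteq \mathcal{P} : p \in A\}$, $[\![\lnot\xi]\!] = 2^{\mathcal{P}} \setminus [\![\xi]\!]$, $[\![\xi_1 \lor \xi_2]\!] = [\![\xi_1]\!] \cup [\![\xi_2]\!]$. Regular expressions $\rho ::= \varepsilon \mid \xi \mid \rho + \rho \mid \rho \circ \rho \mid \rho^\ast$. Matching on infixes of a word $w$: $w[i,j) \vdash \varepsilon$ iff $j=i$; $w[i,j) \vdash \xi$ iff $j=i+1$ and $w[i] \in [\![\xi]\!]$; $w[i,j)\vdash \rho_1+\rho_2$ iff $w[i,j)\vdash\rho_1$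 or $w[i,j)\vdash\rho_2$; $w[i,j)\vdash \rho_1\circ\rho_2$ iff there is $k\in\{i,\ldots,j\}$ with $w[i,k)\vdash\rho_1$ and $w[k,j)\vdash\rho_2$; $w[i,j)\vdash\rho^\ast$ iff $j=i$ or there is $k\in\{i+1,\ldots,j\}$ with $w[i,k)\vdash\rho$ and $w[k,j)\vdash\rho^\ast$. $L(\rho)=\{w\in(2^{\mathcal{P}})^\ast : w[0,|w|)\vdash\rho\}$. PSL formulas: $\varphi ::= p\in\mathcal{P} \mid \lnot\varphi \mid \varphi\lor\varphi \mid \mathbf{X}\varphi \mid \varphi\,\mathbf{U}\,\varphi \mid \rho\mapsto\varphi$, evaluated on $\alpha\in(2^{\mathcal{P}})^\omega$: $\alpha\models p$ iff $p\in\alpha[0]$; $\alpha\models\lnot\varphi$ iff not $\alpha\models\varphi$; $\alpha\models\varphi_1\lor\varphi_2$ iff $\alpha\models\varphi_1$ or $\alpha\models\varphi_2$; $\alpha\models\mathbf{X}\varphi$ iff $\alpha[1,\infty)\models\varphi$; $\alpha\models\varphi_1\mathbf{U}\varphi_2$ iff there is $j$ with $\alpha[j,\infty)\models\varphi_2$ and $\alpha[i,\infty)\models\varphi_1$ for all $i<j$; $\alpha\models\rho\mapsto\varphi$ iff for all $i\in\mathbb{N}\setminus\{0\}$, $\alpha[0,i)\vdash\rho$ implies $\alpha[i-1,\infty)\models\varphi$. *)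

theory Defs
  imports Main
begin

(* The finite set of atomic propositions P is modelled as the universe of a
   finite type 'a; letters of the alphabet 2^P are values of type 'a set. *)

datatype 'a atomic = AProp 'a | ANot "'a atomic" | AOr "'a atomic" "'a atomic"

fun atom_sem :: "'a atomic \<Rightarrow> 'a set set" where
  "atom_sem (AProp p) = {A. p \<in> A}"
| "atom_sem (ANot x) = UNIV - atom_sem x"
| "atom_sem (AOr x y) = atom_sem x \<union> atom_sem y"

datatype 'a rexp = Eps | Atom "'a atomic" | Plus "'a rexp" "'a rexp"
  | Conc "'a rexp" "'a rexp" | Star "'a rexp"

(* w[i,j) |- rho, for a word given as a function of positions *)
inductive rmatch :: "(nat \<Rightarrow> 'a set) \<Rightarrow> nat \<Rightarrow> nat \<Rightarrow> 'a rexp \<Rightarrow> bool" where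
  m_eps: "rmatch w i i Eps"
| m_atom: "w i \<in> atom_sem \<xi> \<Longrightarrow> rmatch w i (Suc i) (Atom \<xi>)"
| m_plus1: "rmatch w i j r1 \<Longrightarrow> rmatch w i j (Plus r1 r2)"
| m_plus2: "rmatch w i j r2 \<Longrightarrow> rmatch w i j (Plus r1 r2)"
| m_conc: "\<lbrakk>i \<le> k; k \<le> j; rmatch w i k r1; rmatch w k j r2\<rbrakk> \<Longrightarrow> rmatch w i j (Conc r1 r2)"
| m_star0: "rmatch w i i (Star r)"
| m_star: "\<lbrakk>i < k; k \<le> j; rmatch w i k r; rmatch w k j (Star r)\<rbrakk> \<Longrightarrow> rmatch w i j (Star r)"

definition lang :: "'a rexp \<Rightarrow> 'a set list set" where
  "lang r = {w. rmatch (\<lambda>i. w ! i) 0 (length w) r}"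

datatype 'a psl = PProp 'a | PNot "'a psl" | POr "'a psl" "'a psl" | PX "'a psl"
  | PU "'a psl" "'a psl" | PTrig "'a rexp" "'a psl"

definition suffix :: "(nat \<Rightarrow> 'a set) \<Rightarrow> nat \<Rightarrow> (nat \<Rightarrow> 'a set)" where
  "suffix \<alpha> i = (\<lambda>k. \<alpha> (i + k))"

fun sat :: "(nat \<Rightarrow> 'a set) \<Rightarrow> 'a psl \<Rightarrow> bool" where
  "sat \<alpha> (PProp p) = (p \<in> \<alpha> 0)"
| "sat \<alpha> (PNot f) = (\<not> sat \<alpha> f)"
| "sat \<alpha> (POr f g) = (sat \<alpha> f \<or> sat \<alpha> g)"
| "sat \<alpha> (PX f) = sat (suffix \<alpha> 1) f"
| "sat \<alpha> (PU f g) = (\<exists>j. sat (suffix \<alpha> j) g \<and> (\<forall>i<j. sat (suffix \<alpha> i) f))"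
| "sat \<alpha> (PTrig r f) = (\<forall>i>0. rmatch \<alpha> 0 i r \<longrightarrow> sat (suffix \<alpha> (i - 1)) f)"

definition lasso :: "'a list \<Rightarrow> 'a list \<Rightarrow> nat \<Rightarrow> 'a" where
  "lasso u v i = (if i < length u then u ! i else v ! ((i - length u) mod length v))"

(* DFA with state set {0..<n}, alphabet 'b (all letters) *)
definition dfa_accepts :: "(nat \<Rightarrow> 'b \<Rightarrow> nat) \<Rightarrow> nat \<Rightarrow> nat set \<Rightarrow> 'b list \<Rightarrow> bool" where
  "dfa_accepts \<delta> q0 F w = (foldl \<delta> q0 w \<in> F)"

definition is_dfa :: "nat \<Rightarrow> (nat \<Rightarrow> 'b \<Rightarrow> nat) \<Rightarrow> nat \<Rightarrow> nat set \<Rightarrow> bool" where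
  "is_dfa n \<delta> q0 F = (q0 < n \<and> F \<subseteq> {..<n} \<and> (\<forall>q<n. \<forall>a. \<delta> q a < n))"

definition min_dfa_states :: "'b list set \<Rightarrow> nat" where
  "min_dfa_states L = (LEAST n. \<exists>\<delta> q0 F. is_dfa n \<delta> q0 F \<and> {w. dfa_accepts \<delta> q0 F w} = L)"

end

theory Submission
  imports Defs
begin

(* The trigger only asks whether rho matches the infix starting at i, so rho may be replaced
   by a DFA with m states. Of the m + 1 positions |u| + |v| + t|v| (t = 0..m), all beyond i and
   in the periodic part of u v^omega, two are reached in the same state; cutting out the copies
   of v between them preserves a match ending further right and, by periodicity, leaves the
   suffix on which phi is evaluated unchanged. So every match ending at or beyond
   |u| + (m + 1)|v| has an equivalent one ending below that bound. *)

section \<open>Regular expressions denote languages\<close>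

definition conc :: "'b list set \<Rightarrow> 'b list set \<Rightarrow> 'b list set" where
  "conc A B = {xs @ ys | xs ys. xs \<in> A \<and> ys \<in> B}"

(* Pieces are nonempty, mirroring the condition i < k of m_star. *)
inductive_set star :: "'b list set \<Rightarrow> 'b list set" for A where
  star_Nil: "[] \<in> star A"
| star_append: "\<lbrakk>x \<in> A; x \<noteq> []; y \<in> star A\<rbrakk> \<Longrightarrow> x @ y \<in> star A"

fun rexp_lang :: "'a rexp \<Rightarrow> 'a set list set" where
  "rexp_lang Eps = {[]}"
| "rexp_lang (Atom \<xi>) = {[a] | a. a \<in> atom_sem \<xi>}"
| "rexp_lang (Plus r s) = rexp_lang r \<union> rexp_lang s"
| "rexp_lang (Conc r s) = conc (rexp_lang r) (rexp_lang s)"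
| "rexp_lang (Star r) = star (rexp_lang r)"

lemma upt_append: "i \<le> k \<Longrightarrow> k \<le> j \<Longrightarrow> [i..<j] = [i..<k] @ [k..<j]"
  by (metis le_add_diff_inverse upt_add_eq_append)

lemma map_upt_eq_append:
  assumes "i \<le> j" "map w [i..<j] = xs @ ys"
  obtains k where "i \<le> k" "k \<le> j" "xs = map w [i..<k]" "ys = map w [k..<j]"
proof -
  define k where "k = i + length xs"
  have "j - i = length xs + length ys" using arg_cong[OF assms(2), of length] by simp
  then have "i \<le> k" "k \<le> j" using assms(1) by (auto simp: k_def)
  then have "map w [i..<j] = map w [i..<k] @ map w [k..<j]" by (simp add: upt_append[of i k j])
  then have "xs = map w [i..<k] \<and> ys = map w [k..<j]"
    using assms(2) append_eq_append_conv[of "map w [i..<k]" xs] by (simp add: k_def)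
  then show thesis using that \<open>i \<le> k\<close> \<open>k \<le> j\<close> by blast
qed

lemma rmatch_imp_rexp_lang: "rmatch w i j r \<Longrightarrow> i \<le> j \<and> map w [i..<j] \<in> rexp_lang r"
proof (induction rule: rmatch.induct)
  case (m_conc i k j w r1 r2)
  then show ?case by (auto simp: conc_def upt_append[of i k j])
next
  case (m_star i k j w r)
  then have "map w [i..<k] @ map w [k..<j] \<in> star (rexp_lang r)"
    by (intro star_append) auto
  with m_star show ?case by (simp add: upt_append[of i k j])
qed (auto intro: star_Nil)

lemma rexp_lang_imp_rmatch: "i \<le> j \<Longrightarrow> map w [i..<j] \<in> rexp_lang r \<Longrightarrow> rmatch w i j r"
proof (induction r arbitrary: i j)
  case (Atom \<xi>)
  then obtain a where a: "map w [i..<j] = [a]" "a \<in> atom_sem \<xi>" by auto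
  then have "length [i..<j] = 1" by (metis length_map length_Cons list.size(3) One_nat_def)
  then have "j = Suc i" by simp
  with a show ?case by (auto intro: rmatch.intros)
next
  case (Conc r1 r2)
  then obtain xs ys where "map w [i..<j] = xs @ ys" "xs \<in> rexp_lang r1" "ys \<in> rexp_lang r2"
    by (auto simp: conc_def)
  with Conc show ?case by (metis map_upt_eq_append rmatch.m_conc)
next
  case (Star r)
  have "rmatch w i j (Star r)" if "xs \<in> star (rexp_lang r)" "i \<le> j" "map w [i..<j] = xs" for xs i
    using that
  proof (induction arbitrary: i rule: star.induct)
    case (star_append x y)
    then obtain k where k: "i \<le> k" "k \<le> j" "x = map w [i..<k]" "y = map w [k..<j]"
      by (metis map_upt_eq_append)
    with star_append.hyps(2) have "i < k" by (metis list.simps(8) not_less upt_conv_Nil)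
    have "rmatch w i k r" using Star.IH k star_append.hyps(1) by simp
    moreover have "rmatch w k j (Star r)" using star_append.IH k by simp
    ultimately show ?case using rmatch.m_star \<open>i < k\<close> \<open>k \<le> j\<close> by blast
  qed (auto intro: rmatch.intros)
  with Star.prems show ?case by simp
qed (auto intro: rmatch.intros)

lemma rmatch_iff_rexp_lang: "rmatch w i j r \<longleftrightarrow> i \<le> j \<and> map w [i..<j] \<in> rexp_lang r"
  using rmatch_imp_rexp_lang rexp_lang_imp_rmatch by blast

lemma lang_eq_rexp_lang: "lang r = rexp_lang r"
  unfolding lang_def rmatch_iff_rexp_lang by (simp add: map_nth)

section \<open>Regularity via left quotients\<close>

definition lquot :: "'b list \<Rightarrow> 'b list set \<Rightarrow> 'b list set" where
  "lquot x L = {y. x @ y \<in> L}"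

definition lquots :: "'b list set \<Rightarrow> 'b list set set" where
  "lquots L = range (\<lambda>x. lquot x L)"

lemma lquot_Nil [simp]: "lquot [] L = L"
  by (simp add: lquot_def)

lemma lquot_append: "lquot y (lquot x L) = lquot (x @ y) L"
  by (simp add: lquot_def)

lemma star_star_append: "x \<in> star A \<Longrightarrow> y \<in> star A \<Longrightarrow> x @ y \<in> star A"
  by (induction rule: star.induct) (auto intro: star.intros)

lemma lquot_conc:
  "lquot x (conc A B) = conc (lquot x A) B \<union> \<Union> {lquot z B | z. \<exists>y. x = y @ z \<and> y \<in> A}"
proof (intro set_eqI iffI)
  fix w assume "w \<in> lquot x (conc A B)"
  then obtain p q where pq: "x @ w = p @ q" "p \<in> A" "q \<in> B" by (auto simp: lquot_def conc_def)
  then obtain us where "(x = p @ us \<and> us @ w = q) \<or> (x @ us = p \<and> w = us @ q)"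
    by (metis append_eq_append_conv2)
  then show "w \<in> conc (lquot x A) B \<union> \<Union> {lquot z B | z. \<exists>y. x = y @ z \<and> y \<in> A}"
  proof
    assume "x = p @ us \<and> us @ w = q"
    then have "w \<in> lquot us B" "lquot us B \<in> {lquot z B | z. \<exists>y. x = y @ z \<and> y \<in> A}"
      using pq by (auto simp: lquot_def)
    then show ?thesis by blast
  next
    assume "x @ us = p \<and> w = us @ q"
    then show ?thesis using pq by (auto simp: lquot_def conc_def)
  qed
next
  fix w assume "w \<in> conc (lquot x A) B \<union> \<Union> {lquot z B | z. \<exists>y. x = y @ z \<and> y \<in> A}"
  then show "w \<in> lquot x (conc A B)"
    by (auto simp: lquot_def conc_def) (metis append.assoc, blast)
qed

lemma star_append_split:
  assumes "x @ w \<in> star A" "x \<noteq> []"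
  shows "\<exists>y s. x = y @ s \<and> s \<noteq> [] \<and> y \<in> star A \<and> w \<in> conc (lquot s A) (star A)"
  using assms
proof (induction "x @ w" arbitrary: x w rule: star.induct)
  case (star_append p t)
  then obtain us where "(x = p @ us \<and> us @ w = t) \<or> (x @ us = p \<and> w = us @ t)"
    by (metis append_eq_append_conv2)
  then show ?case
  proof
    assume split: "x = p @ us \<and> us @ w = t"
    show ?thesis
    proof (cases "us = []")
      case True
      then have "x = [] @ p" "w = [] @ t" "[] \<in> lquot p A"
        using split star_append.hyps(1) by (auto simp: lquot_def)
      then show ?thesis using star_append.hyps(2,3) star_Nil unfolding conc_def by blast
    next
      case False
      then obtain y s where "us = y @ s" "s \<noteq> []" "y \<in> star A" "w \<in> conc (lquot s A) (star A)"
        using star_append.hyps(4) split by blast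
      moreover have "p @ y \<in> star A" using star.star_append star_append.hyps(1,2) \<open>y \<in> star A\<close> .
      ultimately show ?thesis using split by (metis append.assoc)
    qed
  next
    assume split: "x @ us = p \<and> w = us @ t"
    then have "w \<in> conc (lquot x A) (star A)"
      using star_append.hyps(1,3) unfolding conc_def lquot_def by blast
    then show ?thesis using star_append.prems star_Nil by (metis append_Nil)
  qed
qed simp

lemma lquot_star:
  assumes "x \<noteq> []"
  shows "lquot x (star A) =
    (\<Union>S \<in> {lquot s A | s. \<exists>y. x = y @ s \<and> s \<noteq> [] \<and> y \<in> star A}. conc S (star A))"
proof (intro set_eqI iffI)
  fix w assume "w \<in> lquot x (star A)"
  then show "w \<in> (\<Union>S \<in> {lquot s A | s. \<exists>y. x = y @ s \<and> s \<noteq> [] \<and> y \<in> star A}. conc S (star A))"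
    using star_append_split[of x w A] assms by (auto simp: lquot_def)
next
  fix w assume "w \<in> (\<Union>S \<in> {lquot s A | s. \<exists>y. x = y @ s \<and> s \<noteq> [] \<and> y \<in> star A}. conc S (star A))"
  then obtain s y p t where "x = y @ s" "s \<noteq> []" "y \<in> star A" "w = p @ t" "s @ p \<in> A" "t \<in> star A"
    by (auto simp: conc_def lquot_def)
  then show "w \<in> lquot x (star A)"
    using star.star_append[of "s @ p" A t] star_star_append by (fastforce simp: lquot_def)
qed

lemma finite_lquots_rexp_lang: "finite (lquots (rexp_lang r))"
proof (induction r)
  case Eps
  have "lquots {[]} \<subseteq> {{[]}, {}}"
    by (auto simp: lquots_def lquot_def)
  then show ?case by (auto intro: finite_subset)
next
  case (Atom \<xi>)
  let ?L = "{[a] | a. a \<in> atom_sem \<xi>}"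
  have "lquot y ?L \<in> {?L, {[]}, {}}" for y
    by (cases y; cases "tl y") (auto simp: lquot_def)
  then have "lquots ?L \<subseteq> {?L, {[]}, {}}" by (auto simp: lquots_def)
  then show ?case by (simp add: finite_subset)
next
  case (Plus r s)
  have "lquots (rexp_lang r \<union> rexp_lang s)
      \<subseteq> (\<lambda>(S, T). S \<union> T) ` (lquots (rexp_lang r) \<times> lquots (rexp_lang s))"
  proof
    fix X assume "X \<in> lquots (rexp_lang r \<union> rexp_lang s)"
    then obtain x where "X = lquot x (rexp_lang r) \<union> lquot x (rexp_lang s)"
      by (auto simp: lquots_def lquot_def)
    then show "X \<in> (\<lambda>(S, T). S \<union> T) ` (lquots (rexp_lang r) \<times> lquots (rexp_lang s))"
      by (auto simp: lquots_def)
  qed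
  then show ?case using Plus by (simp add: finite_subset)
next
  case (Conc r s)
  let ?A = "rexp_lang r" and ?B = "rexp_lang s"
  have "lquots (conc ?A ?B) \<subseteq> (\<lambda>(S, U). conc S ?B \<union> \<Union> U) ` (lquots ?A \<times> Pow (lquots ?B))"
  proof
    fix X assume "X \<in> lquots (conc ?A ?B)"
    then obtain x where "X = conc (lquot x ?A) ?B \<union> \<Union> {lquot z ?B | z. \<exists>y. x = y @ z \<and> y \<in> ?A}"
      by (auto simp: lquots_def lquot_conc)
    moreover have "(lquot x ?A, {lquot z ?B | z. \<exists>y. x = y @ z \<and> y \<in> ?A}) \<in> lquots ?A \<times> Pow (lquots ?B)"
      by (auto simp: lquots_def)
    ultimately show "X \<in> (\<lambda>(S, U). conc S ?B \<union> \<Union> U) ` (lquots ?A \<times> Pow (lquots ?B))"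
      by force
  qed
  then show ?case using Conc by (simp add: finite_subset)
next
  case (Star r)
  let ?A = "rexp_lang r"
  have "lquots (star ?A) \<subseteq> insert (star ?A) ((\<lambda>U. \<Union>S \<in> U. conc S (star ?A)) ` Pow (lquots ?A))"
  proof
    fix X assume "X \<in> lquots (star ?A)"
    then obtain x where x: "X = lquot x (star ?A)" by (auto simp: lquots_def)
    show "X \<in> insert (star ?A) ((\<lambda>U. \<Union>S \<in> U. conc S (star ?A)) ` Pow (lquots ?A))"
    proof (cases "x = []")
      case False
      then have "X = (\<Union>S \<in> {lquot s ?A | s. \<exists>y. x = y @ s \<and> s \<noteq> [] \<and> y \<in> star ?A}. conc S (star ?A))"
        using x lquot_star by simp
      moreover have "{lquot s ?A | s. \<exists>y. x = y @ s \<and> s \<noteq> [] \<and> y \<in> star ?A} \<in> Pow (lquots ?A)"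
        unfolding lquots_def by blast
      ultimately show ?thesis by blast
    qed (simp add: x)
  qed
  then show ?case using Star by (simp add: finite_subset)
qed

(* The Myhill-Nerode automaton: states are the left quotients, numbered by a bijection h. *)
lemma dfa_of_finite_lquots:
  assumes "finite (lquots L)"
  shows "\<exists>n \<delta> q0 F. is_dfa n \<delta> q0 F \<and> {w. dfa_accepts \<delta> q0 F w} = L"
proof -
  obtain h where h: "bij_betw h (lquots L) {..<card (lquots L)}"
    using ex_bij_betw_finite_nat[OF assms] atLeast0LessThan by metis
  define n where "n = card (lquots L)"
  define \<delta> where "\<delta> q a = h (lquot [a] (inv_into (lquots L) h q))" for q a
  define F where "F = h ` {S \<in> lquots L. [] \<in> S}"
  have lquot_in: "lquot x L \<in> lquots L" for x
    by (simp add: lquots_def)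
  have h_lt: "S \<in> lquots L \<Longrightarrow> h S < n" for S
    using h unfolding n_def bij_betw_def by auto
  have inv_h: "S \<in> lquots L \<Longrightarrow> inv_into (lquots L) h (h S) = S" for S
    using h by (simp add: bij_betw_def)
  have run: "foldl \<delta> (h L) w = h (lquot w L)" for w
    by (induction w rule: rev_induct) (simp_all add: \<delta>_def inv_h lquot_in lquot_append)
  have "is_dfa n \<delta> (h L) F"
    unfolding is_dfa_def
  proof (intro conjI allI impI)
    show "h L < n" using h_lt lquot_in[of "[]"] by simp
    show "F \<subseteq> {..<n}" using h_lt by (auto simp: F_def)
    fix q a assume "q < n"
    then have "inv_into (lquots L) h q \<in> lquots L"
      using h unfolding n_def bij_betw_def by (simp add: inv_into_into)
    then obtain x where "inv_into (lquots L) h q = lquot x L"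
      by (auto simp: lquots_def)
    then show "\<delta> q a < n"
      by (simp add: \<delta>_def lquot_append h_lt lquot_in)
  qed
  moreover have "dfa_accepts \<delta> (h L) F w \<longleftrightarrow> w \<in> L" for w
  proof -
    have "inj_on h (lquots L)"
      using h by (simp add: bij_betw_def)
    then have "dfa_accepts \<delta> (h L) F w \<longleftrightarrow> lquot w L \<in> {S \<in> lquots L. [] \<in> S}"
      unfolding dfa_accepts_def run F_def by (rule inj_on_image_mem_iff) (auto simp: lquot_in)
    then show ?thesis using lquot_in by (simp add: lquot_def)
  qed
  ultimately show ?thesis by blast
qed

lemma min_dfa_states_dfa:
  assumes "\<exists>n \<delta> q0 F. is_dfa n \<delta> q0 F \<and> {w. dfa_accepts \<delta> q0 F w} = L"
  shows "\<exists>\<delta> q0 F. is_dfa (min_dfa_states L) \<delta> q0 F \<and> {w. dfa_accepts \<delta> q0 F w} = L"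
  unfolding min_dfa_states_def by (rule LeastI_ex[OF assms])

lemma foldl_dfa_closed:
  "(\<forall>q<n. \<forall>a. \<delta> q a < n) \<Longrightarrow> q < n \<Longrightarrow> foldl \<delta> q xs < n"
  by (induction xs arbitrary: q) auto

section \<open>Runs of a DFA on an eventually periodic word\<close>

lemma periodic_add_mult:
  fixes w :: "nat \<Rightarrow> 'b"
  assumes "\<forall>k\<ge>s. w (k + p) = w k" "s \<le> k"
  shows "w (k + c * p) = w k"
proof (induction c)
  case (Suc c)
  have "w (k + Suc c * p) = w ((k + c * p) + p)" by (simp add: algebra_simps)
  also have "\<dots> = w (k + c * p)" using assms by simp
  finally show ?case using Suc.IH by simp
qed simp

lemma lasso_add_length:
  assumes "v \<noteq> []" "length u \<le> k"
  shows "lasso u v (k + length v) = lasso u v k"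
proof -
  have "k + length v - length u = (k - length u) + length v" using assms(2) by simp
  then have "(k + length v - length u) mod length v = (k - length u) mod length v" by simp
  then show ?thesis using assms(2) by (simp add: lasso_def)
qed

lemma suffix_lasso_add_mult:
  assumes "v \<noteq> []" "length u \<le> k"
  shows "suffix (lasso u v) (k + c * length v) = suffix (lasso u v) k"
proof
  fix x
  have "lasso u v ((k + x) + c * length v) = lasso u v (k + x)"
    using periodic_add_mult[of "length u" "lasso u v" "length v"] lasso_add_length[OF assms(1)]
      assms(2) by simp
  then show "suffix (lasso u v) (k + c * length v) x = suffix (lasso u v) k x"
    by (simp add: suffix_def algebra_simps)
qed

lemma dfa_run_periodic_shrink:
  assumes closed: "\<forall>q<n. \<forall>a. \<delta> q a < n" and "q0 < n"
    and period: "\<forall>k\<ge>s. w (k + p) = w k" and "0 < p" "i \<le> s" "s + n * p \<le> j"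
  shows "\<exists>c>0. s + c * p \<le> j \<and>
    foldl \<delta> q0 (map w [i..<j - c * p]) = foldl \<delta> q0 (map w [i..<j])"
proof -
  \<comment> \<open>pigeonhole on the states reached at the n + 1 positions s, s + p, ..., s + n p\<close>
  define state where "state t = foldl \<delta> q0 (map w [i..<s + t * p])" for t
  have "state ` {0..n} \<subseteq> {..<n}"
    using foldl_dfa_closed[OF closed \<open>q0 < n\<close>] by (auto simp: state_def)
  then have "\<not> inj_on state {0..n}"
    using card_inj_on_le[of state "{0..n}" "{..<n}"] by auto
  then obtain t1 t2 where t: "t1 < t2" "t2 \<le> n" "state t1 = state t2"
    unfolding inj_on_def by (metis atLeastAtMost_iff linorder_neqE_nat)
  define c where "c = t2 - t1"
  have t2_eq: "s + t2 * p = (s + t1 * p) + c * p"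
    using t(1) by (simp add: c_def algebra_simps)
  have "t2 * p \<le> n * p" using t(2) by simp
  then have "s + t2 * p \<le> j" using \<open>s + n * p \<le> j\<close> by linarith
  have segment: "map w [s + t1 * p..<j - c * p] = map w [s + t2 * p..<j]"
  proof (rule nth_equalityI)
    show "length (map w [s + t1 * p..<j - c * p]) = length (map w [s + t2 * p..<j])"
      using t2_eq by simp
    fix k assume "k < length (map w [s + t1 * p..<j - c * p])"
    then have "k < j - c * p - (s + t1 * p)" by simp
    moreover have "w ((s + t1 * p + k) + c * p) = w (s + t1 * p + k)"
      using periodic_add_mult[OF period] by simp
    ultimately show "map w [s + t1 * p..<j - c * p] ! k = map w [s + t2 * p..<j] ! k"
      using t2_eq by (simp add: algebra_simps)
  qed
  have "foldl \<delta> q0 (map w [i..<j]) = foldl \<delta> (state t2) (map w [s + t2 * p..<j])"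
    using \<open>i \<le> s\<close> \<open>s + t2 * p \<le> j\<close> by (simp add: state_def upt_append[of i "s + t2 * p" j])
  also have "\<dots> = foldl \<delta> (state t1) (map w [s + t1 * p..<j - c * p])"
    using t(3) segment by simp
  also have "\<dots> = foldl \<delta> q0 (map w [i..<j - c * p])"
    using \<open>i \<le> s\<close> \<open>s + t2 * p \<le> j\<close> t2_eq
    by (simp add: state_def upt_append[of i "s + t1 * p" "j - c * p"])
  finally show ?thesis
    using t(1) \<open>s + t2 * p \<le> j\<close> t2_eq by (intro exI[of _ c]) (simp add: c_def)
qed

lemma dfa_run_periodic_reduce:
  assumes closed: "\<forall>q<n. \<forall>a. \<delta> q a < n" and "q0 < n"
    and period: "\<forall>k\<ge>s. w (k + p) = w k" and "0 < p" "i \<le> s" "s \<le> j"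
  shows "\<exists>j' c. s \<le> j' \<and> j' < s + n * p \<and> j = j' + c * p \<and>
    foldl \<delta> q0 (map w [i..<j']) = foldl \<delta> q0 (map w [i..<j])"
  using \<open>s \<le> j\<close>
proof (induction j rule: less_induct)
  case (less j)
  show ?case
  proof (cases "j < s + n * p")
    case True
    with less.prems show ?thesis by (intro exI[of _ j] exI[of _ 0]) simp
  next
    case False
    then obtain c where c: "0 < c" "s + c * p \<le> j"
      and same: "foldl \<delta> q0 (map w [i..<j - c * p]) = foldl \<delta> q0 (map w [i..<j])"
      using dfa_run_periodic_shrink[OF assms(1-5)] by (meson not_less)
    have "0 < c * p" using c(1) \<open>0 < p\<close> by simp
    then have "j - c * p < j" using c(2) by linarith
    moreover have "s \<le> j - c * p" using c(2) by simp
    ultimately obtain j' c' where "s \<le> j'" "j' < s + n * p" "j - c * p = j' + c' * p"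
      and "foldl \<delta> q0 (map w [i..<j']) = foldl \<delta> q0 (map w [i..<j - c * p])"
      using less.IH by blast
    with c same show ?thesis
      by (intro exI[of _ j'] exI[of _ "c' + c"]) (simp add: algebra_simps)
  qed
qed

section \<open>Trigger formulas on lasso words\<close>

lemma map_suffix_upt: "map (suffix w i) [k..<l] = map w [i + k..<i + l]"
  by (rule nth_equalityI) (auto simp: suffix_def add.assoc)

lemma rmatch_suffix: "rmatch (suffix w i) k l r \<longleftrightarrow> rmatch w (i + k) (i + l) r"
  by (simp add: rmatch_iff_rexp_lang map_suffix_upt)

lemma suffix_suffix: "suffix (suffix \<alpha> i) k = suffix \<alpha> (i + k)"
  by (simp add: suffix_def add.assoc)

lemma sat_suffix_PTrig:
  "sat (suffix \<alpha> i) (PTrig r \<phi>) \<longleftrightarrow> (\<forall>j>i. rmatch \<alpha> i j r \<longrightarrow> sat (suffix \<alpha> (j - 1)) \<phi>)"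
proof -
  have "sat (suffix \<alpha> i) (PTrig r \<phi>) \<longleftrightarrow>
      (\<forall>k>0. rmatch \<alpha> i (i + k) r \<longrightarrow> sat (suffix \<alpha> (i + (k - 1))) \<phi>)"
    by (simp only: sat.simps rmatch_suffix suffix_suffix add_0_right)
  also have "\<dots> \<longleftrightarrow> (\<forall>j>i. rmatch \<alpha> i j r \<longrightarrow> sat (suffix \<alpha> (j - 1)) \<phi>)"
  proof (intro iffI allI impI)
    fix j assume hyp: "\<forall>k>0. rmatch \<alpha> i (i + k) r \<longrightarrow> sat (suffix \<alpha> (i + (k - 1))) \<phi>"
      and "i < j" "rmatch \<alpha> i j r"
    then have "0 < j - i" "rmatch \<alpha> i (i + (j - i)) r" by simp_all
    then have "sat (suffix \<alpha> (i + (j - i - 1))) \<phi>" using hyp by blast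
    moreover have "i + (j - i - 1) = j - 1" using \<open>i < j\<close> by simp
    ultimately show "sat (suffix \<alpha> (j - 1)) \<phi>" by simp
  next
    fix k :: nat assume "\<forall>j>i. rmatch \<alpha> i j r \<longrightarrow> sat (suffix \<alpha> (j - 1)) \<phi>"
      and "0 < k" "rmatch \<alpha> i (i + k) r"
    then show "sat (suffix \<alpha> (i + (k - 1))) \<phi>" by simp
  qed
  finally show ?thesis .
qed

lemma rmatch_lasso_reduce:
  assumes "v \<noteq> []" "i < length u + length v" "length u + length v \<le> j"
    and "rmatch (lasso u v) i j \<rho>"
  shows "\<exists>j' c. length u + length v \<le> j' \<and>
    j' < length u + (min_dfa_states (lang \<rho>) + 1) * length v \<and>
    j = j' + c * length v \<and> rmatch (lasso u v) i j' \<rho>"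
proof -
  let ?m = "min_dfa_states (lang \<rho>)" and ?s = "length u + length v"
  obtain \<delta> q0 F where dfa: "is_dfa ?m \<delta> q0 F" and acc: "{w. dfa_accepts \<delta> q0 F w} = lang \<rho>"
    using min_dfa_states_dfa dfa_of_finite_lquots finite_lquots_rexp_lang lang_eq_rexp_lang
    by metis
  have match: "rmatch (lasso u v) i k \<rho> \<longleftrightarrow> i \<le> k \<and> foldl \<delta> q0 (map (lasso u v) [i..<k]) \<in> F"
    for k
    using acc by (auto simp: rmatch_iff_rexp_lang lang_eq_rexp_lang dfa_accepts_def)
  have period: "\<forall>k\<ge>?s. lasso u v (k + length v) = lasso u v k"
    using lasso_add_length[OF assms(1)] by simp
  obtain j' c where "?s \<le> j'" "j' < ?s + ?m * length v" "j = j' + c * length v"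
    and "foldl \<delta> q0 (map (lasso u v) [i..<j']) = foldl \<delta> q0 (map (lasso u v) [i..<j])"
    using dfa_run_periodic_reduce[OF _ _ period] dfa assms(1-3) unfolding is_dfa_def
    by (metis length_greater_0_conv less_imp_le)
  with assms(2,4) match show ?thesis
    by (intro exI[of _ j'] exI[of _ c]) (auto simp: algebra_simps)
qed

theorem lemma3:
  fixes u v :: "('a::finite) set list" and \<rho> :: "'a rexp" and \<phi> :: "'a psl"
    and m b i :: nat
  assumes "v \<noteq> []"
    and "m = min_dfa_states (lang \<rho>)"
    and "b = m + 1"
    and "i \<le> length (u @ v) - 1"
  shows "sat (suffix (lasso u v) i) (PTrig \<rho> \<phi>) \<longleftrightarrow>
    (\<forall>j. i < j \<and> j < length u + b * length v \<longrightarrow>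
       rmatch (lasso u v) i j \<rho> \<longrightarrow> sat (suffix (lasso u v) (j - 1)) \<phi>)"
proof -
  let ?\<alpha> = "lasso u v"
  have i_lt: "i < length u + length v" using assms(1,4) by (cases v) auto
  have "\<forall>j>i. rmatch ?\<alpha> i j \<rho> \<longrightarrow> sat (suffix ?\<alpha> (j - 1)) \<phi>"
    if bounded: "\<forall>j. i < j \<and> j < length u + b * length v \<longrightarrow>
       rmatch ?\<alpha> i j \<rho> \<longrightarrow> sat (suffix ?\<alpha> (j - 1)) \<phi>"
  proof (intro allI impI)
    fix j assume "i < j" "rmatch ?\<alpha> i j \<rho>"
    show "sat (suffix ?\<alpha> (j - 1)) \<phi>"
    proof (cases "j < length u + b * length v")
      case False
      then have "length u + length v \<le> j" using assms(3) by simp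
      then obtain j' c where j': "length u + length v \<le> j'" "j' < length u + b * length v"
        "j = j' + c * length v" "rmatch ?\<alpha> i j' \<rho>"
        using rmatch_lasso_reduce[OF assms(1) i_lt] \<open>rmatch ?\<alpha> i j \<rho>\<close> assms(2,3) by blast
      have "0 < length v" using assms(1) by simp
      with j'(1,3) have "length u \<le> j' - 1" "j - 1 = (j' - 1) + c * length v" by linarith+
      then have "suffix ?\<alpha> (j - 1) = suffix ?\<alpha> (j' - 1)"
        using suffix_lasso_add_mult[OF assms(1)] by simp
      moreover have "sat (suffix ?\<alpha> (j' - 1)) \<phi>" using bounded j' i_lt by simp
      ultimately show ?thesis by simp
    qed (use bounded \<open>i < j\<close> \<open>rmatch ?\<alpha> i j \<rho>\<close> in blast)
  qed
  then show ?thesis unfolding sat_suffix_PTrig by blast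
qed

end
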